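(* Let $X_1,X_2,\dots$ be a strictly stationary ergodic sequence with common distribution function $F$, let $h$ be measurable, $F^{-1}(t)=\inf\{x:F(x)\ge t\}$, $H(t)=h(F^{-1}(t))$, and let $1\le p<\infty$ with $\mathbf{E}|h(X_1)|^p<\infty$. Let $U_1,U_2,\dots$ be a strictly stationary ergodic sequence of random variables, each uniformly distributed on $[0,1]$, let $G_n$ be the empirical distribution function of $U_1,\dots,U_n$ and $G_n^{-1}(t)=\inf\{x:G_n(x)\ge t\}$. Then $$\int_0^1|H(G_n^{-1}(t))-H(t)|^p\,dt\to0\quad\text{almost surely}.$$
   Context: Note $\mathbf{E}|h(X_1)|^p=\int_0^1|H(t)|^p\,dt$. *)

theory Defs
  imports "HOL-Probability.Probability"
begin

definition seq_space :: "(nat \<Rightarrow> real) measure" where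
  "seq_space = PiM UNIV (\<lambda>_. borel)"

definition strictly_stationary :: "'a measure \<Rightarrow> (nat \<Rightarrow> 'a \<Rightarrow> real) \<Rightarrow> bool" where
  "strictly_stationary M X \<longleftrightarrow>
     (\<forall>i. X i \<in> borel_measurable M) \<and>
     distr M seq_space (\<lambda>\<omega> i. X (Suc i) \<omega>) = distr M seq_space (\<lambda>\<omega> i. X i \<omega>)"

definition ergodic_process :: "'a measure \<Rightarrow> (nat \<Rightarrow> 'a \<Rightarrow> real) \<Rightarrow> bool" where
  "ergodic_process M X \<longleftrightarrow>
     (\<forall>A \<in> sets seq_space. {x. (\<lambda>i. x (Suc i)) \<in> A} = A \<longrightarrow>
        measure M {\<omega> \<in> space M. (\<lambda>i. X i \<omega>) \<in> A} \<in> {0, 1})"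

definition gen_inv :: "(real \<Rightarrow> real) \<Rightarrow> real \<Rightarrow> real" where
  "gen_inv F t = Inf {x. t \<le> F x}"

definition emp_df :: "(nat \<Rightarrow> 'a \<Rightarrow> real) \<Rightarrow> nat \<Rightarrow> 'a \<Rightarrow> real \<Rightarrow> real" where
  "emp_df U n \<omega> x = real (card {i. i < n \<and> U i \<omega> \<le> x}) / real n"

end

theory Submission
  imports Defs
begin

(* For every t in (0,1) the empirical quantile G_n^-1(t) tends to t almost surely: the ergodic
   theorem applied to indicators gives G_n(q) -> q at every rational q. Hence the claim holds for
   bounded continuous functions in place of H, by bounded convergence. For general H in L^p(0,1)
   (note E|h(X_1)|^p = int |H|^p, as F^-1 maps the uniform law to the law of X_1) approximate H by
   such a phi. The error term int |(H - phi)(G_n^-1(t))|^p dt equals the empirical mean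
   (1/n) sum_i |H - phi|^p(U_i), because G_n^-1 maps the uniform law on (0,1) to the empirical
   measure of U_1, ..., U_n; by the ergodic theorem it tends to int |H - phi|^p, which is small.
   Birkhoff's ergodic theorem itself is derived from the maximal ergodic lemma. *)

section \<open>Birkhoff's ergodic theorem\<close>

definition birkhoff_sum :: "('a \<Rightarrow> 'a) \<Rightarrow> ('a \<Rightarrow> real) \<Rightarrow> nat \<Rightarrow> 'a \<Rightarrow> real" where
  "birkhoff_sum T f n x = (\<Sum>k<n. f ((T ^^ k) x))"

definition birkhoff_max :: "('a \<Rightarrow> 'a) \<Rightarrow> ('a \<Rightarrow> real) \<Rightarrow> nat \<Rightarrow> 'a \<Rightarrow> real" where
  "birkhoff_max T f n x = Max ((\<lambda>k. birkhoff_sum T f k x) ` {..n})"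

lemma birkhoff_sum_0 [simp]: "birkhoff_sum T f 0 x = 0"
  by (simp add: birkhoff_sum_def)

lemma birkhoff_sum_Suc: "birkhoff_sum T f (Suc n) x = f x + birkhoff_sum T f n (T x)"
  unfolding birkhoff_sum_def by (subst sum.lessThan_Suc_shift) (simp add: funpow_swap1)

lemma birkhoff_sum_diff_const:
  "birkhoff_sum T (\<lambda>x. f x - c) n x = birkhoff_sum T f n x - real n * c"
  by (simp add: birkhoff_sum_def sum_subtractf)

lemma birkhoff_sum_uminus: "birkhoff_sum T (\<lambda>x. - f x) n x = - birkhoff_sum T f n x"
  by (simp add: birkhoff_sum_def sum_negf)

lemma birkhoff_sum_le_max: "k \<le> n \<Longrightarrow> birkhoff_sum T f k x \<le> birkhoff_max T f n x"
  unfolding birkhoff_max_def by (intro Max_ge) auto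

lemma birkhoff_max_nonneg: "0 \<le> birkhoff_max T f n x"
  using birkhoff_sum_le_max[of 0 n T f x] by simp

lemma birkhoff_max_Suc:
  "birkhoff_max T f (Suc n) x = max (birkhoff_max T f n x) (birkhoff_sum T f (Suc n) x)"
  unfolding birkhoff_max_def atMost_Suc image_insert
  by (subst Max_insert) (auto simp: max.commute)

lemma birkhoff_max_le_shift:
  assumes "0 < birkhoff_max T f n x"
  shows "birkhoff_max T f n x \<le> f x + birkhoff_max T f n (T x)"
proof -
  have "birkhoff_max T f n x \<in> (\<lambda>k. birkhoff_sum T f k x) ` {..n}"
    unfolding birkhoff_max_def by (rule Max_in) auto
  then obtain k where k: "k \<le> n" "birkhoff_max T f n x = birkhoff_sum T f k x"
    by auto
  with assms obtain j where j: "k = Suc j" by (cases k) auto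
  have "birkhoff_max T f n x = f x + birkhoff_sum T f j (T x)"
    using k j by (simp add: birkhoff_sum_Suc)
  also have "\<dots> \<le> f x + birkhoff_max T f n (T x)"
    using k j by (simp add: birkhoff_sum_le_max)
  finally show ?thesis .
qed

lemma frequently_sequentially_Suc:
  "(\<exists>\<^sub>F n in sequentially. P (Suc n)) \<longleftrightarrow> (\<exists>\<^sub>F n in sequentially. P n)"
  unfolding frequently_def using eventually_sequentially_Suc[of "\<lambda>n. \<not> P n"] by simp

lemma frequently_linear_margin:
  fixes a :: "nat \<Rightarrow> real"
  assumes "q' < q" and "\<exists>\<^sub>F n in sequentially. real n * q < a n"
  shows "\<exists>\<^sub>F n in sequentially. real n * q' + C < a n"
proof -
  obtain N :: nat where N: "C / (q - q') < N" using reals_Archimedean2 by blast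
  have "\<forall>\<^sub>F n in sequentially. C < real n * (q - q')"
  proof (rule eventually_sequentiallyI)
    fix n assume "N \<le> n"
    with N assms(1) show "C < real n * (q - q')"
      by (smt (verit, ccfv_SIG) of_nat_le_iff divide_less_eq mult_right_mono)
  qed
  with assms(2) show ?thesis
    by (rule frequently_eventually_frequently[THEN frequently_elim1]) (simp add: algebra_simps)
qed

text \<open>\<open>limsup_birkhoff_gt T f c x\<close> expresses \<open>limsup (birkhoff_sum T f n x / n) > c\<close>; quantifying
  over rationals \<open>q > c\<close> keeps the set measurable and leaves the slack that makes it shift-invariant.\<close>

definition limsup_birkhoff_gt :: "('a \<Rightarrow> 'a) \<Rightarrow> ('a \<Rightarrow> real) \<Rightarrow> real \<Rightarrow> 'a \<Rightarrow> bool" where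
  "limsup_birkhoff_gt T f c x \<longleftrightarrow>
    (\<exists>q::rat. c < of_rat q \<and> (\<exists>\<^sub>F n in sequentially. real n * of_rat q < birkhoff_sum T f n x))"

lemma limsup_birkhoff_gt_shift_iff: "limsup_birkhoff_gt T f c (T x) \<longleftrightarrow> limsup_birkhoff_gt T f c x"
proof
  assume "limsup_birkhoff_gt T f c (T x)"
  then obtain q :: rat where q: "c < of_rat q"
    and freq: "\<exists>\<^sub>F n in sequentially. real n * of_rat q < birkhoff_sum T f n (T x)"
    unfolding limsup_birkhoff_gt_def by blast
  obtain q' :: rat where q': "c < of_rat q'" "of_rat q' < (of_rat q :: real)"
    using of_rat_dense[OF q] by blast
  have "\<exists>\<^sub>F n in sequentially. real n * of_rat q' + (of_rat q' - f x) < birkhoff_sum T f n (T x)"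
    by (rule frequently_linear_margin[OF q'(2) freq])
  then have "\<exists>\<^sub>F n in sequentially. real (Suc n) * of_rat q' < birkhoff_sum T f (Suc n) x"
    by (rule frequently_elim1) (simp add: birkhoff_sum_Suc algebra_simps)
  then have "\<exists>\<^sub>F n in sequentially. real n * of_rat q' < birkhoff_sum T f n x"
    using frequently_sequentially_Suc[where P = "\<lambda>n. real n * of_rat q' < birkhoff_sum T f n x"]
    by blast
  with q' show "limsup_birkhoff_gt T f c x"
    unfolding limsup_birkhoff_gt_def by blast
next
  assume "limsup_birkhoff_gt T f c x"
  then obtain q :: rat where q: "c < of_rat q"
    and freq: "\<exists>\<^sub>F n in sequentially. real n * of_rat q < birkhoff_sum T f n x"
    unfolding limsup_birkhoff_gt_def by blast
  obtain q' :: rat where q': "c < of_rat q'" "of_rat q' < (of_rat q :: real)"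
    using of_rat_dense[OF q] by blast
  have "\<exists>\<^sub>F n in sequentially. real (Suc n) * of_rat q < birkhoff_sum T f (Suc n) x"
    using freq frequently_sequentially_Suc[where P = "\<lambda>n. real n * of_rat q < birkhoff_sum T f n x"]
    by blast
  then have "\<exists>\<^sub>F n in sequentially. real n * of_rat q < birkhoff_sum T f n (T x) + (f x - of_rat q)"
    by (rule frequently_elim1) (simp add: birkhoff_sum_Suc algebra_simps)
  then have "\<exists>\<^sub>F n in sequentially.
      real n * of_rat q' + (f x - of_rat q) < birkhoff_sum T f n (T x) + (f x - of_rat q)"
    by (rule frequently_linear_margin[OF q'(2)])
  then have "\<exists>\<^sub>F n in sequentially. real n * of_rat q' < birkhoff_sum T f n (T x)"
    by (rule frequently_elim1) simp
  with q' show "limsup_birkhoff_gt T f c (T x)"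
    unfolding limsup_birkhoff_gt_def by blast
qed

lemma tendsto_average_of_linear_bounds:
  fixes s :: "nat \<Rightarrow> real"
  assumes upper: "\<And>m. \<forall>\<^sub>F n in sequentially. s n \<le> real n * (L + 1 / Suc m)"
    and lower: "\<And>m. \<forall>\<^sub>F n in sequentially. real n * (L - 1 / Suc m) \<le> s n"
  shows "(\<lambda>n. s n / real n) \<longlonglongrightarrow> L"
proof (rule order_tendstoI)
  fix a assume "L < a"
  then obtain m where m: "1 / Suc m < a - L"
    using ex_inverse_of_nat_less[of "a - L"] by (metis Suc_pred diff_gt_0_iff_gt inverse_eq_divide)
  show "\<forall>\<^sub>F n in sequentially. s n / real n < a"
    using upper[of m] eventually_gt_at_top[of 0]
  proof eventually_elim
    case (elim n)
    then have "s n / real n \<le> L + 1 / Suc m"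
      by (simp add: pos_divide_le_eq mult.commute)
    with m show ?case by linarith
  qed
next
  fix a assume "a < L"
  then obtain m where m: "1 / Suc m < L - a"
    using ex_inverse_of_nat_less[of "L - a"] by (metis Suc_pred diff_gt_0_iff_gt inverse_eq_divide)
  show "\<forall>\<^sub>F n in sequentially. a < s n / real n"
    using lower[of m] eventually_gt_at_top[of 0]
  proof eventually_elim
    case (elim n)
    then have "L - 1 / Suc m \<le> s n / real n"
      by (simp add: pos_le_divide_eq mult.commute)
    with m show ?case by linarith
  qed
qed

locale ergodic_map = prob_space P for P :: "'a measure" and T :: "'a \<Rightarrow> 'a" +
  assumes measurable_T [measurable]: "T \<in> P \<rightarrow>\<^sub>M P"
    and distr_T: "distr P P T = P"
    and invariant_trivial: "\<And>A. A \<in> sets P \<Longrightarrow> T -` A \<inter> space P = A \<Longrightarrow> measure P A \<in> {0, 1}"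
begin

lemma measurable_funpow_T [measurable]: "T ^^ n \<in> P \<rightarrow>\<^sub>M P"
  by (induction n) (simp_all add: measurable_ident)

lemma distr_funpow_T: "distr P P (T ^^ n) = P"
proof (induction n)
  case 0
  show ?case by (simp add: distr_id[unfolded id_def])
next
  case (Suc n)
  have "distr P P (T ^^ Suc n) = distr P P (T ^^ n \<circ> T)"
    by (simp only: funpow_Suc_right)
  also have "\<dots> = distr (distr P P T) P (T ^^ n)"
    by (rule distr_distr[symmetric]) measurable
  also have "\<dots> = P"
    using Suc distr_T by simp
  finally show ?case .
qed

lemma
  fixes f :: "'a \<Rightarrow> real"
  assumes [measurable]: "f \<in> borel_measurable P" and "integrable P f"
  shows integrable_comp_funpow_T: "integrable P (\<lambda>x. f ((T ^^ n) x))"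
    and integral_comp_funpow_T: "(\<integral>x. f ((T ^^ n) x) \<partial>P) = integral\<^sup>L P f"
  using assms distr_funpow_T[of n]
    integrable_distr_eq[OF measurable_funpow_T, of f n] integral_distr[OF measurable_funpow_T, of f n]
  by simp_all

lemma borel_measurable_birkhoff_sum [measurable]:
  assumes [measurable]: "f \<in> borel_measurable P"
  shows "birkhoff_sum T f n \<in> borel_measurable P"
  unfolding birkhoff_sum_def[abs_def] by measurable

lemma borel_measurable_birkhoff_max [measurable]:
  assumes [measurable]: "f \<in> borel_measurable P"
  shows "birkhoff_max T f n \<in> borel_measurable P"
  unfolding birkhoff_max_def[abs_def] by measurable

lemma integrable_birkhoff_sum:
  assumes "f \<in> borel_measurable P" "integrable P f"
  shows "integrable P (birkhoff_sum T f n)"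
  unfolding birkhoff_sum_def[abs_def]
  by (intro Bochner_Integration.integrable_sum integrable_comp_funpow_T assms)

lemma integrable_birkhoff_max:
  assumes "f \<in> borel_measurable P" "integrable P f"
  shows "integrable P (birkhoff_max T f n)"
proof (induction n)
  case 0
  have "birkhoff_max T f 0 = (\<lambda>x. 0)"
    by (simp add: birkhoff_max_def[abs_def])
  then show ?case by simp
next
  case (Suc n)
  then show ?case
    unfolding birkhoff_max_Suc[abs_def] by (intro integrable_max integrable_birkhoff_sum assms)
qed

lemma maximal_ergodic:
  assumes [measurable]: "f \<in> borel_measurable P" and f: "integrable P f"
  shows "0 \<le> (\<integral>x. indicator {x \<in> space P. 0 < birkhoff_max T f n x} x * f x \<partial>P)"
proof -
  let ?A = "{x \<in> space P. 0 < birkhoff_max T f n x}"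
  let ?m = "birkhoff_max T f n"
  have m: "integrable P ?m" and mT: "integrable P (\<lambda>x. ?m (T x))"
    using integrable_birkhoff_max[OF assms] integrable_comp_funpow_T[of ?m 1] by auto
  have "?m x - ?m (T x) \<le> indicator ?A x * f x" if "x \<in> space P" for x
    using that birkhoff_max_le_shift[of T f n x] birkhoff_max_nonneg[of T f n x]
      birkhoff_max_nonneg[of T f n "T x"]
    by (cases "0 < ?m x") auto
  moreover have "?A \<in> sets P" by measurable
  ultimately have "(\<integral>x. ?m x - ?m (T x) \<partial>P) \<le> (\<integral>x. indicator ?A x * f x \<partial>P)"
    using m mT integrable_mult_indicator[OF _ f] by (intro integral_mono) auto
  moreover have "(\<integral>x. ?m x - ?m (T x) \<partial>P) = 0"
    using m mT integral_comp_funpow_T[of ?m 1] by simp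
  ultimately show ?thesis by simp
qed

lemma integral_nonneg_if_AE_birkhoff_sum_pos:
  assumes [measurable]: "f \<in> borel_measurable P" and f: "integrable P f"
    and pos: "AE x in P. \<exists>n. 0 < birkhoff_sum T f n x"
  shows "0 \<le> integral\<^sup>L P f"
proof (rule LIMSEQ_le_const)
  let ?A = "\<lambda>n. {x \<in> space P. 0 < birkhoff_max T f n x}"
  show "(\<lambda>n. \<integral>x. indicator (?A n) x * f x \<partial>P) \<longlonglongrightarrow> integral\<^sup>L P f"
  proof (rule integral_dominated_convergence[where w = "\<lambda>x. norm (f x)"])
    show "AE x in P. (\<lambda>n. indicator (?A n) x * f x) \<longlonglongrightarrow> f x"
      using pos AE_space
    proof eventually_elim
      case (elim x)
      then obtain k where "0 < birkhoff_sum T f k x" by blast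
      then have "\<forall>\<^sub>F n in sequentially. 0 < birkhoff_max T f n x"
        by (auto simp: eventually_sequentially intro: less_le_trans birkhoff_sum_le_max)
      then have "\<forall>\<^sub>F n in sequentially. indicator (?A n) x * f x = f x"
        by (rule eventually_mono) (use elim in \<open>simp add: indicator_def\<close>)
      then show ?case by (rule tendsto_eventually)
    qed
  qed (use f in \<open>auto simp: indicator_def\<close>)
  show "\<exists>N. \<forall>n\<ge>N. 0 \<le> (\<integral>x. indicator (?A n) x * f x \<partial>P)"
    using maximal_ergodic[OF assms(1,2)] by blast
qed

lemma AE_not_limsup_birkhoff_gt:
  assumes [measurable]: "f \<in> borel_measurable P" and f: "integrable P f"
    and c: "integral\<^sup>L P f < c"
  shows "AE x in P. \<not> limsup_birkhoff_gt T f c x"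
proof -
  define J where "J = {x \<in> space P. limsup_birkhoff_gt T f c x}"
  have J: "J \<in> sets P"
    unfolding J_def limsup_birkhoff_gt_def frequently_sequentially by measurable
  have "T -` J \<inter> space P = J"
    using measurable_space[OF measurable_T] by (auto simp: J_def limsup_birkhoff_gt_shift_iff)
  then have "measure P J = 0 \<or> measure P J = 1"
    using invariant_trivial[OF J] by simp
  moreover have "measure P J \<noteq> 1"
  proof
    assume "measure P J = 1"
    then have "AE x in P. x \<in> J"
      using J by (simp add: prob_eq_1)
    then have "AE x in P. \<exists>n. 0 < birkhoff_sum T (\<lambda>x. f x - c) n x"
    proof eventually_elim
      case (elim x)
      then obtain q :: rat and n where q: "c < of_rat q" and n: "real n * of_rat q < birkhoff_sum T f n x"
        unfolding J_def limsup_birkhoff_gt_def by (auto dest: frequently_ex)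
      have "real n * c \<le> real n * of_rat q"
        using q by (intro mult_left_mono) auto
      with n have "0 < birkhoff_sum T (\<lambda>x. f x - c) n x"
        by (simp add: birkhoff_sum_diff_const)
      then show ?case by blast
    qed
    then have "0 \<le> (\<integral>x. f x - c \<partial>P)"
      using f by (intro integral_nonneg_if_AE_birkhoff_sum_pos) auto
    with c f show False by (simp add: prob_space)
  qed
  ultimately show ?thesis
    using J by (intro AE_I[of _ _ J]) (auto simp: J_def emeasure_eq_measure)
qed

lemma AE_eventually_birkhoff_sum_le:
  assumes [measurable]: "f \<in> borel_measurable P" and f: "integrable P f"
    and c: "integral\<^sup>L P f < c"
  shows "AE x in P. \<forall>\<^sub>F n in sequentially. birkhoff_sum T f n x \<le> real n * c"
proof -
  obtain r :: rat where r: "integral\<^sup>L P f < of_rat r" "of_rat r < c"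
    using of_rat_dense[OF c] by blast
  define c' where "c' = (integral\<^sup>L P f + of_rat r) / 2"
  have c': "integral\<^sup>L P f < c'" "c' < of_rat r"
    using r by (auto simp: c'_def)
  have "AE x in P. \<not> limsup_birkhoff_gt T f c' x"
    using f c'(1) by (intro AE_not_limsup_birkhoff_gt) auto
  then show ?thesis
  proof eventually_elim
    case (elim x)
    then have "\<forall>\<^sub>F n in sequentially. birkhoff_sum T f n x \<le> real n * of_rat r"
      using c'(2) unfolding limsup_birkhoff_gt_def frequently_def not_less by blast
    then show ?case
      by (rule eventually_mono) (use r in \<open>smt (verit) mult_left_mono of_nat_0_le_iff\<close>)
  qed
qed

theorem birkhoff_ergodic:
  assumes [measurable]: "f \<in> borel_measurable P" and f: "integrable P f"
  shows "AE x in P. (\<lambda>n. birkhoff_sum T f n x / real n) \<longlonglongrightarrow> integral\<^sup>L P f"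
proof -
  let ?E = "integral\<^sup>L P f"
  have "AE x in P. \<forall>m. \<forall>\<^sub>F n in sequentially. birkhoff_sum T f n x \<le> real n * (?E + 1 / Suc m)"
    using f by (subst AE_all_countable) (auto intro: AE_eventually_birkhoff_sum_le)
  moreover have "AE x in P. \<forall>m. \<forall>\<^sub>F n in sequentially.
      birkhoff_sum T (\<lambda>x. - f x) n x \<le> real n * (- ?E + 1 / Suc m)"
    using f by (subst AE_all_countable) (auto intro: AE_eventually_birkhoff_sum_le)
  ultimately show ?thesis
  proof eventually_elim
    case (elim x)
    show ?case
    proof (rule tendsto_average_of_linear_bounds)
      show "\<forall>\<^sub>F n in sequentially. real n * (?E - 1 / Suc m) \<le> birkhoff_sum T f n x" for m
        using elim(2)[rule_format, of m]
        by (rule eventually_mono) (simp add: birkhoff_sum_uminus algebra_simps)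
    qed (use elim(1) in blast)
  qed
qed

end

section \<open>Stationary ergodic processes\<close>

lemma space_seq_space [simp]: "space seq_space = UNIV"
  by (simp add: seq_space_def space_PiM)

lemma measurable_seq_shift [measurable]: "(\<lambda>x i. x (Suc i)) \<in> seq_space \<rightarrow>\<^sub>M seq_space"
  unfolding seq_space_def by (rule measurable_PiM_single') (auto simp: space_PiM)

lemma measurable_path:
  "(\<And>i. X i \<in> borel_measurable M) \<Longrightarrow> (\<lambda>\<omega> i. X i \<omega>) \<in> M \<rightarrow>\<^sub>M seq_space"
  unfolding seq_space_def by (rule measurable_PiM_single') (auto simp: space_PiM)

lemma funpow_seq_shift: "((\<lambda>x i. x (Suc i)) ^^ k) x = (\<lambda>i. x (i + k))"
  by (induction k) simp_all

lemma ergodic_map_law_of_process: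
  assumes M: "prob_space M" and st: "strictly_stationary M X" and erg: "ergodic_process M X"
  shows "ergodic_map (distr M seq_space (\<lambda>\<omega> i. X i \<omega>)) (\<lambda>x i. x (Suc i))"
proof -
  have path [measurable]: "(\<lambda>\<omega> i. X i \<omega>) \<in> M \<rightarrow>\<^sub>M seq_space"
    using st by (intro measurable_path) (simp add: strictly_stationary_def)
  let ?P = "distr M seq_space (\<lambda>\<omega> i. X i \<omega>)"
  show ?thesis
  proof (intro ergodic_map.intro ergodic_map_axioms.intro)
    show "prob_space ?P"
      by (rule prob_space.prob_space_distr[OF M path])
    show "(\<lambda>x i. x (Suc i)) \<in> ?P \<rightarrow>\<^sub>M ?P"
      using measurable_seq_shift by (simp add: measurable_cong_sets[OF sets_distr sets_distr])
    have "distr ?P ?P (\<lambda>x i. x (Suc i)) = distr ?P seq_space (\<lambda>x i. x (Suc i))"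
      by (rule distr_cong) auto
    also have "\<dots> = distr M seq_space (\<lambda>\<omega> i. X (Suc i) \<omega>)"
      by (subst distr_distr) (auto simp: comp_def)
    also have "\<dots> = ?P"
      using st by (simp add: strictly_stationary_def)
    finally show "distr ?P ?P (\<lambda>x i. x (Suc i)) = ?P" .
    fix A assume A: "A \<in> sets ?P" and inv: "(\<lambda>x i. x (Suc i)) -` A \<inter> space ?P = A"
    have "measure ?P A = measure M {\<omega> \<in> space M. (\<lambda>i. X i \<omega>) \<in> A}"
      using A by (subst measure_distr) (auto intro: arg_cong2[where f = measure])
    then show "measure ?P A \<in> {0, 1}"
      using erg A inv by (simp add: ergodic_process_def vimage_def)
  qed
qed

theorem birkhoff_stationary_process:
  assumes M: "prob_space M" and "strictly_stationary M X" and "ergodic_process M X"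
    and [measurable]: "g \<in> borel_measurable borel" and g: "integrable M (\<lambda>\<omega>. g (X 0 \<omega>))"
  shows "AE \<omega> in M. (\<lambda>n. (\<Sum>i<n. g (X i \<omega>)) / real n) \<longlonglongrightarrow> (\<integral>\<omega>. g (X 0 \<omega>) \<partial>M)"
proof -
  have path [measurable]: "(\<lambda>\<omega> i. X i \<omega>) \<in> M \<rightarrow>\<^sub>M seq_space"
    using assms(2) by (intro measurable_path) (simp add: strictly_stationary_def)
  let ?P = "distr M seq_space (\<lambda>\<omega> i. X i \<omega>)"
  interpret ergodic_map ?P "\<lambda>x i. x (Suc i)"
    using ergodic_map_law_of_process[OF assms(1-3)] .
  have g0 [measurable]: "(\<lambda>x. g (x 0)) \<in> borel_measurable seq_space"
    unfolding seq_space_def by measurable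
  have "integrable ?P (\<lambda>x. g (x 0))"
    using g by (subst integrable_distr_eq[OF path g0]) simp
  then have "AE x in ?P. (\<lambda>n. birkhoff_sum (\<lambda>x i. x (Suc i)) (\<lambda>x. g (x 0)) n x / real n)
      \<longlonglongrightarrow> (\<integral>x. g (x 0) \<partial>?P)"
    by (intro birkhoff_ergodic) simp_all
  then have "AE \<omega> in M. (\<lambda>n. birkhoff_sum (\<lambda>x i. x (Suc i)) (\<lambda>x. g (x 0)) n (\<lambda>i. X i \<omega>) / real n)
      \<longlonglongrightarrow> (\<integral>x. g (x 0) \<partial>?P)"
    by (rule AE_distrD[OF path])
  then show ?thesis
    by (simp add: integral_distr[OF path g0] birkhoff_sum_def funpow_seq_shift)
qed

section \<open>Quantile functions\<close>

abbreviation uniform01 :: "real measure" where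
  "uniform01 \<equiv> restrict_space lborel {0<..<1}"

lemma prob_space_uniform01: "prob_space uniform01"
  by (auto simp: emeasure_restrict_space space_restrict_space intro!: prob_spaceI)

lemma measurable_uniform01I: "f \<in> borel_measurable borel \<Longrightarrow> f \<in> borel_measurable uniform01"
  by (rule measurable_restrict_space1) simp

lemma nn_integral_uniform01_const: "(\<integral>\<^sup>+t. ennreal c \<partial>uniform01) = ennreal c"
  using prob_space.emeasure_space_1[OF prob_space_uniform01] by simp

lemma borel_extension_uniform01:
  fixes H :: "real \<Rightarrow> real"
  assumes "H \<in> borel_measurable uniform01"
  obtains H' where "H' \<in> borel_measurable borel" "\<And>t. t \<in> {0<..<1} \<Longrightarrow> H' t = H t"
proof
  show "(\<lambda>t. indicator {0<..<1} t * H t) \<in> borel_measurable borel"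
    using assms borel_measurable_restrict_space_iff[of "{0<..<1}" lborel H] by simp
qed simp

lemma nn_integral_uniform01:
  "(\<integral>\<^sup>+t. f t \<partial>uniform01) = (\<integral>\<^sup>+t. f t * indicator {0..1} t \<partial>lborel)"
proof -
  have "(\<integral>\<^sup>+t. f t \<partial>uniform01) = (\<integral>\<^sup>+t. f t * indicator {0<..<1} t \<partial>lborel)"
    by (rule nn_integral_restrict_space) simp
  also have "\<dots> = (\<integral>\<^sup>+t. f t * indicator {0..1} t \<partial>lborel)"
  proof (rule nn_integral_cong_AE)
    show "AE t in lborel. f t * indicator {0<..<1} t = f t * indicator {0..1} t"
      using AE_lborel_singleton[of 0] AE_lborel_singleton[of 1]
      by eventually_elim (auto simp: indicator_def)
  qed
  finally show ?thesis .
qed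

lemma nn_integral_lborel_indicator_01:
  "(\<integral>\<^sup>+t. ennreal (indicator {0..1} t * g t) \<partial>lborel) = (\<integral>\<^sup>+t. ennreal (g t) \<partial>uniform01)"
  unfolding nn_integral_uniform01 by (intro nn_integral_cong) (simp add: indicator_def)

lemma nn_integral_uniform_marginal:
  assumes [measurable]: "U \<in> borel_measurable M" "f \<in> borel_measurable borel"
    and "distr M borel U = uniform_measure lborel {0..1}"
  shows "(\<integral>\<^sup>+\<omega>. f (U \<omega>) \<partial>M) = (\<integral>\<^sup>+t. f t \<partial>uniform01)"
proof -
  have "(\<integral>\<^sup>+\<omega>. f (U \<omega>) \<partial>M) = (\<integral>\<^sup>+t. f t \<partial>distr M borel U)"
    by (rule nn_integral_distr[symmetric]) simp_all
  also have "\<dots> = (\<integral>\<^sup>+t. f t \<partial>uniform_measure lborel {0..1})"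
    unfolding assms(3) ..
  also have "\<dots> = (\<integral>\<^sup>+t. f t \<partial>uniform01)"
    by (simp add: nn_integral_uniform_measure nn_integral_uniform01 divide_ennreal_def)
  finally show ?thesis .
qed

lemma
  assumes "real_distribution \<mu>"
  shows distr_gen_inv_cdf: "distr uniform01 borel (gen_inv (cdf \<mu>)) = \<mu>"
    and measurable_gen_inv_cdf: "gen_inv (cdf \<mu>) \<in> borel_measurable uniform01"
proof -
  interpret cdf_distribution \<mu>
    using assms by (simp add: cdf_distribution_def)
  have I: "gen_inv (cdf \<mu>) = I"
    by (simp add: gen_inv_def[abs_def])
  then show "distr uniform01 borel (gen_inv (cdf \<mu>)) = \<mu>"
    using distr_I_eq_M by simp
  have "sets uniform01 = sets (restrict_space borel {0<..<1})"
    by (simp add: sets_restrict_space)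
  with measurable_CI show "gen_inv (cdf \<mu>) \<in> borel_measurable uniform01"
    unfolding I using measurable_cong_sets[OF _ refl] by blast
qed

lemma cdf_distr:
  assumes "X \<in> borel_measurable M"
  shows "cdf (distr M borel X) x = measure M {\<omega> \<in> space M. X \<omega> \<le> x}"
  using assms unfolding cdf_def by (subst measure_distr) (auto intro: arg_cong[where f = "measure M"])

lemma nn_integral_gen_inv_cdf:
  assumes "real_distribution \<mu>" and "\<psi> \<in> borel_measurable borel"
  shows "(\<integral>\<^sup>+t. \<psi> (gen_inv (cdf \<mu>) t) \<partial>uniform01) = (\<integral>\<^sup>+x. \<psi> x \<partial>\<mu>)"
proof -
  have "(\<integral>\<^sup>+x. \<psi> x \<partial>\<mu>) = (\<integral>\<^sup>+x. \<psi> x \<partial>distr uniform01 borel (gen_inv (cdf \<mu>)))"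
    by (simp add: distr_gen_inv_cdf[OF assms(1)])
  also have "\<dots> = (\<integral>\<^sup>+t. \<psi> (gen_inv (cdf \<mu>) t) \<partial>uniform01)"
    using measurable_gen_inv_cdf[OF assms(1)] assms(2) by (intro nn_integral_distr) auto
  finally show ?thesis ..
qed

lemma
  assumes "prob_space M" and "X \<in> borel_measurable M"
  defines "F \<equiv> \<lambda>x. measure M {\<omega> \<in> space M. X \<omega> \<le> x}"
  shows measurable_gen_inv_df: "gen_inv F \<in> borel_measurable uniform01"
    and nn_integral_gen_inv_df:
      "\<psi> \<in> borel_measurable borel \<Longrightarrow> (\<integral>\<^sup>+t. \<psi> (gen_inv F t) \<partial>uniform01) = (\<integral>\<^sup>+\<omega>. \<psi> (X \<omega>) \<partial>M)"
proof -
  have \<mu>: "real_distribution (distr M borel X)"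
    using assms(1,2) by (simp add: prob_space.real_distribution_distr)
  have F: "F = cdf (distr M borel X)"
    unfolding F_def by (rule ext) (simp add: cdf_distr[OF assms(2)])
  show "gen_inv F \<in> borel_measurable uniform01"
    unfolding F by (rule measurable_gen_inv_cdf[OF \<mu>])
  show "(\<integral>\<^sup>+t. \<psi> (gen_inv F t) \<partial>uniform01) = (\<integral>\<^sup>+\<omega>. \<psi> (X \<omega>) \<partial>M)"
    if "\<psi> \<in> borel_measurable borel"
    unfolding F using nn_integral_gen_inv_cdf[OF \<mu> that] that assms(2)
    by (simp add: nn_integral_distr)
qed

lemma gen_inv_between:
  assumes "mono G" and "G r < t" and "t \<le> G r'"
  shows "r \<le> gen_inv G t \<and> gen_inv G t \<le> r'"
proof -
  have lower: "r \<le> x" if "t \<le> G x" for x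
    using that assms monoD[OF assms(1), of x r] by (cases "r \<le> x") auto
  have "r \<le> Inf {x. t \<le> G x}"
    using assms(3) lower by (intro cInf_greatest) auto
  moreover have "Inf {x. t \<le> G x} \<le> r'"
    using assms(3) lower by (intro cInf_lower bdd_belowI) auto
  ultimately show ?thesis
    by (simp add: gen_inv_def)
qed

lemma gen_inv_tendsto:
  fixes G :: "nat \<Rightarrow> real \<Rightarrow> real"
  assumes mono: "\<And>n. mono (G n)"
    and conv: "\<And>q. q \<in> \<rat> \<Longrightarrow> 0 < q \<Longrightarrow> q < 1 \<Longrightarrow> (\<lambda>n. G n q) \<longlonglongrightarrow> q"
    and t: "0 < t" "t < 1"
  shows "(\<lambda>n. gen_inv (G n) t) \<longlonglongrightarrow> t"
proof -
  have between: "\<forall>\<^sub>F n in sequentially. r \<le> gen_inv (G n) t \<and> gen_inv (G n) t \<le> r'"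
    if r: "r \<in> \<rat>" "0 < r" "r < t" and r': "r' \<in> \<rat>" "t < r'" "r' < 1" for r r'
  proof -
    have "\<forall>\<^sub>F n in sequentially. G n r < t" "\<forall>\<^sub>F n in sequentially. t < G n r'"
      using conv[OF r(1,2)] conv[OF r'(1)] r r' t by (auto intro: order_tendstoD)
    then show ?thesis
      by eventually_elim (rule gen_inv_between[OF mono]; simp)
  qed
  obtain r0 where r0: "r0 \<in> \<rat>" "0 < r0" "r0 < t" using Rats_dense_in_real[OF t(1)] by auto
  obtain r1 where r1: "r1 \<in> \<rat>" "t < r1" "r1 < 1" using Rats_dense_in_real[OF t(2)] by auto
  show ?thesis
  proof (rule order_tendstoI)
    fix a assume "a < t"
    then obtain r where "r \<in> \<rat>" "max a 0 < r" "r < t"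
      using Rats_dense_in_real[of "max a 0" t] t by auto
    with between[of r r1] r1 show "\<forall>\<^sub>F n in sequentially. a < gen_inv (G n) t"
      by (auto elim: eventually_mono)
  next
    fix b assume "t < b"
    then obtain r where "r \<in> \<rat>" "t < r" "r < min b 1"
      using Rats_dense_in_real[of t "min b 1"] t by auto
    with between[of r0 r] r0 show "\<forall>\<^sub>F n in sequentially. gen_inv (G n) t < b"
      by (auto elim: eventually_mono)
  qed
qed

section \<open>Empirical measures\<close>

definition empirical_measure :: "(nat \<Rightarrow> real) \<Rightarrow> nat \<Rightarrow> real measure" where
  "empirical_measure u n = distr (measure_pmf (pmf_of_set {..<n})) borel u"

lemma real_distribution_empirical_measure:
  "0 < n \<Longrightarrow> real_distribution (empirical_measure u n)"
  unfolding empirical_measure_def real_distribution_def real_distribution_axioms_def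
  by (auto intro!: measure_pmf.prob_space_distr)

lemma cdf_empirical_measure:
  assumes "0 < n"
  shows "cdf (empirical_measure (\<lambda>i. U i \<omega>) n) = emp_df U n \<omega>"
proof
  fix x
  have "cdf (empirical_measure (\<lambda>i. U i \<omega>) n) x =
      measure (measure_pmf (pmf_of_set {..<n})) ((\<lambda>i. U i \<omega>) -` {..x})"
    unfolding cdf_def empirical_measure_def by (subst measure_distr) auto
  also have "\<dots> = real (card ({..<n} \<inter> (\<lambda>i. U i \<omega>) -` {..x})) / real n"
    using assms by (subst measure_pmf_of_set) auto
  also have "{..<n} \<inter> (\<lambda>i. U i \<omega>) -` {..x} = {i. i < n \<and> U i \<omega> \<le> x}"
    by auto
  finally show "cdf (empirical_measure (\<lambda>i. U i \<omega>) n) x = emp_df U n \<omega> x"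
    by (simp add: emp_df_def)
qed

lemma nn_integral_empirical_measure:
  assumes "0 < n" and "\<psi> \<in> borel_measurable borel" and "\<And>x. 0 \<le> \<psi> x"
  shows "(\<integral>\<^sup>+x. ennreal (\<psi> x) \<partial>empirical_measure u n) = ennreal ((\<Sum>i<n. \<psi> (u i)) / real n)"
proof -
  have "(\<integral>\<^sup>+x. ennreal (\<psi> x) \<partial>empirical_measure u n) =
      (\<integral>\<^sup>+i. ennreal (\<psi> (u i)) \<partial>measure_pmf (pmf_of_set {..<n}))"
    unfolding empirical_measure_def using assms(2) by (subst nn_integral_distr) auto
  also have "\<dots> = (\<Sum>i<n. ennreal (\<psi> (u i))) / of_nat n"
    using assms(1) by (subst nn_integral_pmf_of_set) auto
  also have "\<dots> = ennreal ((\<Sum>i<n. \<psi> (u i)) / real n)"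
    using assms by (simp add: sum_nonneg ennreal_of_nat_eq_real_of_nat divide_ennreal)
  finally show ?thesis .
qed

lemma
  assumes "0 < n"
  shows distr_gen_inv_emp_df: "distr uniform01 borel (gen_inv (emp_df U n \<omega>)) = empirical_measure (\<lambda>i. U i \<omega>) n"
    and measurable_gen_inv_emp_df: "gen_inv (emp_df U n \<omega>) \<in> borel_measurable uniform01"
proof -
  have \<mu>: "real_distribution (empirical_measure (\<lambda>i. U i \<omega>) n)"
    by (rule real_distribution_empirical_measure[OF assms])
  show "distr uniform01 borel (gen_inv (emp_df U n \<omega>)) = empirical_measure (\<lambda>i. U i \<omega>) n"
    using distr_gen_inv_cdf[OF \<mu>] by (simp add: cdf_empirical_measure[OF assms])
  show "gen_inv (emp_df U n \<omega>) \<in> borel_measurable uniform01"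
    using measurable_gen_inv_cdf[OF \<mu>] by (simp add: cdf_empirical_measure[OF assms])
qed

lemma nn_integral_gen_inv_emp_df:
  assumes "0 < n" and "\<psi> \<in> borel_measurable borel" and "\<And>x. 0 \<le> \<psi> x"
  shows "(\<integral>\<^sup>+t. ennreal (\<psi> (gen_inv (emp_df U n \<omega>) t)) \<partial>uniform01) =
    ennreal ((\<Sum>i<n. \<psi> (U i \<omega>)) / real n)"
  using nn_integral_gen_inv_cdf[OF real_distribution_empirical_measure[OF assms(1), of "\<lambda>i. U i \<omega>"],
      of "\<lambda>x. ennreal (\<psi> x)"]
    nn_integral_empirical_measure[OF assms, of "\<lambda>i. U i \<omega>"] assms(2)
  by (simp add: cdf_empirical_measure[OF assms(1)])

lemma AE_gen_inv_emp_df_in: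
  assumes "0 < n" and "A \<in> sets borel" and "\<And>i. U i \<omega> \<in> A"
  shows "AE t in uniform01. gen_inv (emp_df U n \<omega>) t \<in> A"
proof -
  have "AE x in empirical_measure (\<lambda>i. U i \<omega>) n. x \<in> A"
    unfolding empirical_measure_def using assms
    by (subst AE_distr_iff) (auto simp: AE_measure_pmf_iff)
  then have "AE x in distr uniform01 borel (gen_inv (emp_df U n \<omega>)). x \<in> A"
    unfolding distr_gen_inv_emp_df[OF assms(1)] .
  then show ?thesis
    by (rule AE_distrD[OF measurable_gen_inv_emp_df[OF assms(1)]])
qed

lemma nn_integral_gen_inv_emp_df_cong:
  assumes "0 < n" and "\<And>i. U i \<omega> \<in> {0<..<1}" and H': "\<And>t. t \<in> {0<..<1} \<Longrightarrow> H' t = H t"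
  shows "(\<integral>\<^sup>+t. f (H' (gen_inv (emp_df U n \<omega>) t)) (H' t) \<partial>uniform01) =
    (\<integral>\<^sup>+t. f (H (gen_inv (emp_df U n \<omega>) t)) (H t) \<partial>uniform01)"
proof -
  have "AE t in uniform01. gen_inv (emp_df U n \<omega>) t \<in> {0<..<1}"
    using assms(1,2) by (intro AE_gen_inv_emp_df_in) auto
  then have "AE t in uniform01.
      f (H' (gen_inv (emp_df U n \<omega>) t)) (H' t) = f (H (gen_inv (emp_df U n \<omega>) t)) (H t)"
    using AE_space by eventually_elim (simp add: H' space_restrict_space)
  then show ?thesis
    by (rule nn_integral_cong_AE)
qed

lemma mono_emp_df: "mono (emp_df U n \<omega>)"
  unfolding emp_df_def by (intro monoI divide_right_mono of_nat_mono card_mono) auto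

section \<open>Approximation in \<open>L\<^sup>p(0,1)\<close>\<close>

lemma powr_abs_diff_le_3:
  fixes a b c d p :: real
  assumes "0 < p"
  shows "\<bar>a - b\<bar> powr p \<le> 3 powr p * (\<bar>a - c\<bar> powr p + \<bar>c - d\<bar> powr p + \<bar>d - b\<bar> powr p)"
proof -
  define m where "m = max \<bar>a - c\<bar> (max \<bar>c - d\<bar> \<bar>d - b\<bar>)"
  have "\<bar>a - b\<bar> \<le> 3 * m"
    unfolding m_def by (smt (verit))
  then have "\<bar>a - b\<bar> powr p \<le> (3 * m) powr p"
    using assms by (intro powr_mono2) auto
  also have "\<dots> = 3 powr p * m powr p"
    by (simp add: powr_mult m_def)
  also have "m powr p \<le> \<bar>a - c\<bar> powr p + \<bar>c - d\<bar> powr p + \<bar>d - b\<bar> powr p"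
    unfolding m_def by (auto simp: max_def)
  finally show ?thesis by simp
qed

lemma Lp_truncation_tendsto_zero:
  fixes H :: "real \<Rightarrow> real"
  assumes [measurable]: "H \<in> borel_measurable borel" and p: "0 < p"
    and fin: "(\<integral>\<^sup>+t. ennreal (\<bar>H t\<bar> powr p) \<partial>uniform01) < \<infinity>"
  shows "(\<lambda>K. \<integral>\<^sup>+t. ennreal (\<bar>H t - max (- real K) (min (real K) (H t))\<bar> powr p) \<partial>uniform01)
    \<longlonglongrightarrow> 0"
proof -
  have "(\<lambda>K. \<integral>\<^sup>+t. ennreal (\<bar>H t - max (- real K) (min (real K) (H t))\<bar> powr p) \<partial>uniform01)
      \<longlonglongrightarrow> (\<integral>\<^sup>+t. 0 \<partial>uniform01)"
  proof (rule nn_integral_dominated_convergence[where w = "\<lambda>t. ennreal (\<bar>H t\<bar> powr p)"])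
    show "AE t in uniform01. ennreal (\<bar>H t - max (- real K) (min (real K) (H t))\<bar> powr p)
        \<le> ennreal (\<bar>H t\<bar> powr p)" for K
      using p by (intro AE_I2 ennreal_leI powr_mono2) auto
    show "AE t in uniform01.
        (\<lambda>K. ennreal (\<bar>H t - max (- real K) (min (real K) (H t))\<bar> powr p)) \<longlonglongrightarrow> 0"
    proof (intro AE_I2 tendsto_eventually)
      fix t
      obtain N :: nat where "\<bar>H t\<bar> \<le> real N" using real_arch_simple by blast
      then show "\<forall>\<^sub>F K in sequentially. ennreal (\<bar>H t - max (- real K) (min (real K) (H t))\<bar> powr p) = 0"
        by (auto simp: eventually_sequentially intro!: exI[of _ N])
    qed
  qed (use fin in \<open>auto intro: measurable_uniform01I\<close>)
  then show ?thesis by simp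
qed

lemma bounded_convergence_Lp_uniform01:
  fixes f :: "nat \<Rightarrow> real \<Rightarrow> real"
  assumes [measurable]: "\<And>j. f j \<in> borel_measurable uniform01"
    and bound: "\<And>j t. \<bar>f j t\<bar> \<le> B" and p: "0 < p"
    and lim: "AE t in uniform01. (\<lambda>j. f j t) \<longlonglongrightarrow> 0"
  shows "(\<lambda>j. \<integral>\<^sup>+t. ennreal (\<bar>f j t\<bar> powr p) \<partial>uniform01) \<longlonglongrightarrow> 0"
proof -
  have "(\<lambda>j. \<integral>\<^sup>+t. ennreal (\<bar>f j t\<bar> powr p) \<partial>uniform01) \<longlonglongrightarrow> (\<integral>\<^sup>+t. 0 \<partial>uniform01)"
  proof (rule nn_integral_dominated_convergence[where w = "\<lambda>_. ennreal (B powr p)"])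
    show "AE t in uniform01. ennreal (\<bar>f j t\<bar> powr p) \<le> ennreal (B powr p)" for j
    proof (rule AE_I2)
      fix t
      show "ennreal (\<bar>f j t\<bar> powr p) \<le> ennreal (B powr p)"
        using bound[of j t] p by (intro ennreal_leI powr_mono2) auto
    qed
    show "AE t in uniform01. (\<lambda>j. ennreal (\<bar>f j t\<bar> powr p)) \<longlonglongrightarrow> 0"
      using lim
    proof eventually_elim
      case (elim t)
      then have "(\<lambda>j. \<bar>f j t\<bar>) \<longlonglongrightarrow> 0"
        by (simp add: tendsto_rabs_zero_iff)
      then show ?case
        using p by (auto intro!: tendsto_zero_powrI simp flip: ennreal_0)
    qed
    show "(\<integral>\<^sup>+t. ennreal (B powr p) \<partial>uniform01) < \<infinity>"
      by (subst nn_integral_uniform01_const) simp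
  qed measurable
  then show ?thesis by simp
qed

lemma bounded_continuous_approx_AE:
  fixes g :: "real \<Rightarrow> real"
  assumes [measurable]: "g \<in> borel_measurable borel" and g: "\<And>x. \<bar>g x\<bar> \<le> K"
  obtains \<phi> :: "nat \<Rightarrow> real \<Rightarrow> real" where "\<And>j. continuous_on UNIV (\<phi> j)" "\<And>j x. \<bar>\<phi> j x\<bar> \<le> K"
    "AE t in lborel. (\<lambda>j. \<phi> j t) \<longlonglongrightarrow> g t"
proof -
  have "g \<in> borel_measurable lebesgue"
    by (rule measurable_completion) simp
  then have "g measurable_on UNIV"
    by (intro lebesgue_measurable_imp_measurable_on) auto
  then obtain N \<gamma> where N: "negligible N" and \<gamma>: "\<And>j. continuous_on UNIV (\<gamma> j)"
    and lim: "\<And>x. x \<notin> N \<Longrightarrow> (\<lambda>j. \<gamma> j x) \<longlonglongrightarrow> g x"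
    unfolding measurable_on_def by auto
  show ?thesis
  proof
    show "continuous_on UNIV (\<lambda>x. max (- K) (min K (\<gamma> j x)))" for j
      by (intro continuous_intros \<gamma>)
    show "\<bar>max (- K) (min K (\<gamma> j x))\<bar> \<le> K" for j x
      using g[of x] by auto
    have "AE t in lebesgue. t \<notin> N"
      using N by (simp add: negligible_iff_null_sets AE_not_in)
    then have "AE t in lborel. t \<notin> N"
      by (simp add: AE_completion_iff)
    then show "AE t in lborel. (\<lambda>j. max (- K) (min K (\<gamma> j t))) \<longlonglongrightarrow> g t"
    proof eventually_elim
      case (elim t)
      have "(\<lambda>j. max (- K) (min K (\<gamma> j t))) \<longlonglongrightarrow> max (- K) (min K (g t))"
        by (intro tendsto_intros lim elim)
      moreover have "max (- K) (min K (g t)) = g t"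
        using g[of t] by (simp add: abs_le_iff)
      ultimately show ?case by simp
    qed
  qed
qed

lemma bounded_Lp_approx_continuous:
  fixes g :: "real \<Rightarrow> real" and e :: ennreal
  assumes [measurable]: "g \<in> borel_measurable borel" and g: "\<And>x. \<bar>g x\<bar> \<le> K"
    and p: "0 < p" and e: "0 < e"
  obtains \<phi> where "continuous_on UNIV \<phi>" "\<And>x. \<bar>\<phi> x\<bar> \<le> K"
    "(\<integral>\<^sup>+t. ennreal (\<bar>g t - \<phi> t\<bar> powr p) \<partial>uniform01) < e"
proof -
  obtain \<phi> where \<phi>: "\<And>j. continuous_on UNIV (\<phi> j)" "\<And>j x. \<bar>\<phi> j x\<bar> \<le> K"
    and lim: "AE t in lborel. (\<lambda>j. \<phi> j t) \<longlonglongrightarrow> g t"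
    using bounded_continuous_approx_AE[OF assms(1,2)] by blast
  have [measurable]: "\<phi> j \<in> borel_measurable borel" for j
    using \<phi>(1) by (rule borel_measurable_continuous_onI)
  have "(\<lambda>j. \<integral>\<^sup>+t. ennreal (\<bar>g t - \<phi> j t\<bar> powr p) \<partial>uniform01) \<longlonglongrightarrow> 0"
  proof (rule bounded_convergence_Lp_uniform01[OF _ _ p])
    show "(\<lambda>t. g t - \<phi> j t) \<in> borel_measurable uniform01" for j
      by (rule measurable_uniform01I) measurable
    show "\<bar>g t - \<phi> j t\<bar> \<le> 2 * K" for j t
      using abs_triangle_ineq4[of "g t" "\<phi> j t"] g[of t] \<phi>(2)[of j t] by linarith
    have "AE t in lborel. (\<lambda>j. g t - \<phi> j t) \<longlonglongrightarrow> 0"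
      using lim
    proof eventually_elim
      case (elim t)
      show ?case
        using tendsto_diff[OF tendsto_const[of "g t"] elim] by simp
    qed
    then show "AE t in uniform01. (\<lambda>j. g t - \<phi> j t) \<longlonglongrightarrow> 0"
      by (subst AE_restrict_space_iff) (auto elim: AE_mp)
  qed
  then have "\<forall>\<^sub>F j in sequentially. (\<integral>\<^sup>+t. ennreal (\<bar>g t - \<phi> j t\<bar> powr p) \<partial>uniform01) < e"
    using e by (intro order_tendstoD(2))
  then obtain j where "(\<integral>\<^sup>+t. ennreal (\<bar>g t - \<phi> j t\<bar> powr p) \<partial>uniform01) < e"
    by (auto simp: eventually_sequentially)
  with \<phi> show ?thesis by (intro that) auto
qed

lemma Lp_approx_bounded_continuous:
  fixes H :: "real \<Rightarrow> real"
  assumes [measurable]: "H \<in> borel_measurable borel" and p: "0 < p"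
    and fin: "(\<integral>\<^sup>+t. ennreal (\<bar>H t\<bar> powr p) \<partial>uniform01) < \<infinity>" and e: "0 < e"
  obtains \<phi> B where "continuous_on UNIV \<phi>" "\<And>x. \<bar>\<phi> x\<bar> \<le> B"
    "(\<integral>\<^sup>+t. ennreal (\<bar>H t - \<phi> t\<bar> powr p) \<partial>uniform01) < ennreal e"
proof -
  define \<delta> where "\<delta> = e / (4 * 3 powr p)"
  have \<delta>: "0 < \<delta>" using e by (simp add: \<delta>_def)
  define HK where "HK K t = max (- real K) (min (real K) (H t))" for K :: nat and t
  have "\<forall>\<^sub>F K in sequentially. (\<integral>\<^sup>+t. ennreal (\<bar>H t - HK K t\<bar> powr p) \<partial>uniform01) < ennreal \<delta>"
    using Lp_truncation_tendsto_zero[OF assms(1-3)] \<delta> unfolding HK_def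
    by (intro order_tendstoD(2)) auto
  then obtain K where K: "(\<integral>\<^sup>+t. ennreal (\<bar>H t - HK K t\<bar> powr p) \<partial>uniform01) < ennreal \<delta>"
    by (auto simp: eventually_sequentially)
  have HK_meas [measurable]: "HK K \<in> borel_measurable borel"
    unfolding HK_def by measurable
  have HK_bound: "\<bar>HK K x\<bar> \<le> real K" for x
    unfolding HK_def by auto
  have "0 < ennreal \<delta>"
    using \<delta> by simp
  then obtain \<phi> where \<phi>: "continuous_on UNIV \<phi>" "\<And>x. \<bar>\<phi> x\<bar> \<le> real K"
    and \<phi>_approx: "(\<integral>\<^sup>+t. ennreal (\<bar>HK K t - \<phi> t\<bar> powr p) \<partial>uniform01) < ennreal \<delta>"
    using bounded_Lp_approx_continuous[OF HK_meas HK_bound p] by blast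
  have [measurable]: "\<phi> \<in> borel_measurable borel"
    using \<phi>(1) by (rule borel_measurable_continuous_onI)
  have "\<bar>H t - \<phi> t\<bar> powr p \<le> 3 powr p * (\<bar>H t - HK K t\<bar> powr p + \<bar>HK K t - \<phi> t\<bar> powr p)" for t
    using powr_abs_diff_le_3[OF p, of "H t" "\<phi> t" "HK K t" "\<phi> t"] by simp
  then have "(\<integral>\<^sup>+t. ennreal (\<bar>H t - \<phi> t\<bar> powr p) \<partial>uniform01)
      \<le> (\<integral>\<^sup>+t. ennreal (3 powr p) *
           (ennreal (\<bar>H t - HK K t\<bar> powr p) + ennreal (\<bar>HK K t - \<phi> t\<bar> powr p)) \<partial>uniform01)"
    by (intro nn_integral_mono) (simp add: ennreal_mult[symmetric] ennreal_plus[symmetric] del: ennreal_plus)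
  also have "\<dots> = ennreal (3 powr p) * ((\<integral>\<^sup>+t. ennreal (\<bar>H t - HK K t\<bar> powr p) \<partial>uniform01) +
      (\<integral>\<^sup>+t. ennreal (\<bar>HK K t - \<phi> t\<bar> powr p) \<partial>uniform01))"
    by (simp add: nn_integral_cmult nn_integral_add measurable_uniform01I)
  also have "\<dots> \<le> ennreal (3 powr p) * (ennreal \<delta> + ennreal \<delta>)"
    using K \<phi>_approx by (intro mult_left_mono add_mono) auto
  also have "\<dots> = ennreal (e / 2)"
    using \<delta> by (simp add: \<delta>_def ennreal_mult[symmetric] ennreal_plus[symmetric] field_simps del: ennreal_plus)
  also have "\<dots> < ennreal e"
    using e by (simp add: ennreal_lessI)
  finally show ?thesis
    using \<phi> by (intro that) auto
qed

lemma Lp_comp_tendsto_zero_continuous: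
  fixes \<phi> :: "real \<Rightarrow> real" and G :: "nat \<Rightarrow> real \<Rightarrow> real"
  assumes \<phi>: "continuous_on UNIV \<phi>" "\<And>x. \<bar>\<phi> x\<bar> \<le> B" and p: "0 < p"
    and G [measurable]: "\<And>n. G n \<in> borel_measurable uniform01"
    and lim: "\<And>t. t \<in> {0<..<1} \<Longrightarrow> (\<lambda>n. G n t) \<longlonglongrightarrow> t"
  shows "(\<lambda>n. \<integral>\<^sup>+t. ennreal (\<bar>\<phi> (G n t) - \<phi> t\<bar> powr p) \<partial>uniform01) \<longlonglongrightarrow> 0"
proof (rule bounded_convergence_Lp_uniform01[OF _ _ p])
  have [measurable]: "\<phi> \<in> borel_measurable borel"
    using \<phi>(1) by (rule borel_measurable_continuous_onI)
  have [measurable]: "(\<lambda>t. t) \<in> borel_measurable uniform01"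
    by (rule measurable_uniform01I) simp
  show "(\<lambda>t. \<phi> (G n t) - \<phi> t) \<in> borel_measurable uniform01" for n
    by measurable
  show "\<bar>\<phi> (G n t) - \<phi> t\<bar> \<le> 2 * B" for n t
    using abs_triangle_ineq4[of "\<phi> (G n t)" "\<phi> t"] \<phi>(2)[of "G n t"] \<phi>(2)[of t] by linarith
  show "AE t in uniform01. (\<lambda>n. \<phi> (G n t) - \<phi> t) \<longlonglongrightarrow> 0"
  proof (rule AE_I2)
    fix t assume "t \<in> space uniform01"
    then have "(\<lambda>n. \<phi> (G n t)) \<longlonglongrightarrow> \<phi> t"
      using lim by (intro continuous_on_tendsto_compose[OF \<phi>(1)]) (auto simp: space_restrict_space)
    then show "(\<lambda>n. \<phi> (G n t) - \<phi> t) \<longlonglongrightarrow> 0"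
      by (simp add: LIM_zero_iff)
  qed
qed

lemma Lp_approx_seq_bounded_continuous:
  fixes H :: "real \<Rightarrow> real"
  assumes "H \<in> borel_measurable borel" and p: "0 < p"
    and "(\<integral>\<^sup>+t. ennreal (\<bar>H t\<bar> powr p) \<partial>uniform01) < \<infinity>"
  obtains \<phi> :: "nat \<Rightarrow> real \<Rightarrow> real" and B where "\<And>m. continuous_on UNIV (\<phi> m)"
    "\<And>m x. \<bar>\<phi> m x\<bar> \<le> B m" "\<And>m. (\<integral>\<^sup>+t. ennreal (\<bar>H t - \<phi> m t\<bar> powr p) \<partial>uniform01) < \<infinity>"
    "(\<lambda>m. \<integral>\<^sup>+t. ennreal (\<bar>H t - \<phi> m t\<bar> powr p) \<partial>uniform01) \<longlonglongrightarrow> 0"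
proof -
  have "\<exists>\<phi> B. continuous_on UNIV \<phi> \<and> (\<forall>x. \<bar>\<phi> x\<bar> \<le> B) \<and>
      (\<integral>\<^sup>+t. ennreal (\<bar>H t - \<phi> t\<bar> powr p) \<partial>uniform01) < ennreal (1 / Suc m)" for m
    by (rule Lp_approx_bounded_continuous[OF assms, of "1 / Suc m"]) auto
  then obtain \<phi> B where \<phi>: "\<And>m. continuous_on UNIV (\<phi> m)" "\<And>m x. \<bar>\<phi> m x\<bar> \<le> B m"
    and approx: "\<And>m. (\<integral>\<^sup>+t. ennreal (\<bar>H t - \<phi> m t\<bar> powr p) \<partial>uniform01) < ennreal (1 / Suc m)"
    by metis
  show ?thesis
  proof (rule that[OF \<phi>])
    show "(\<integral>\<^sup>+t. ennreal (\<bar>H t - \<phi> m t\<bar> powr p) \<partial>uniform01) < \<infinity>" for m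
      by (rule order.strict_trans[OF approx[of m]]) simp
    show "(\<lambda>m. \<integral>\<^sup>+t. ennreal (\<bar>H t - \<phi> m t\<bar> powr p) \<partial>uniform01) \<longlonglongrightarrow> 0"
    proof (rule tendsto_sandwich[where f = "\<lambda>_. 0" and h = "\<lambda>m. ennreal (1 / Suc m)"])
      show "\<forall>\<^sub>F m in sequentially.
          (\<integral>\<^sup>+t. ennreal (\<bar>H t - \<phi> m t\<bar> powr p) \<partial>uniform01) \<le> ennreal (1 / Suc m)"
        using approx by (intro always_eventually allI less_imp_le)
      show "(\<lambda>m. ennreal (1 / Suc m)) \<longlonglongrightarrow> 0"
        using tendsto_ennrealI[OF LIMSEQ_inverse_real_of_nat] by (simp add: inverse_eq_divide)
    qed simp_all
  qed
qed

section \<open>Convergence of the quantile integrals\<close>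

lemma ennreal_tendsto_zero_by_approximation:
  fixes L :: "nat \<Rightarrow> ennreal"
  assumes le: "\<And>m. \<forall>\<^sub>F n in sequentially. L n \<le> R m n"
    and R: "\<And>m. R m \<longlonglongrightarrow> r m" and r: "r \<longlonglongrightarrow> 0"
  shows "L \<longlonglongrightarrow> 0"
proof (rule order_tendstoI)
  fix e :: ennreal assume "0 < e"
  then obtain m where "r m < e"
    using order_tendstoD(2)[OF r] by (auto simp: eventually_sequentially)
  then have "\<forall>\<^sub>F n in sequentially. R m n < e"
    by (rule order_tendstoD(2)[OF R])
  then show "\<forall>\<^sub>F n in sequentially. L n < e"
    using le[of m] by eventually_elim (rule le_less_trans)
qed simp

lemma Lp_gen_inv_emp_df_le:
  fixes H \<phi> :: "real \<Rightarrow> real" and U :: "nat \<Rightarrow> 'a \<Rightarrow> real" and \<omega> :: 'a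
  assumes n: "0 < n" and [measurable]: "H \<in> borel_measurable borel" "\<phi> \<in> borel_measurable borel"
    and p: "0 < p"
  defines "G \<equiv> gen_inv (emp_df U n \<omega>)"
  shows "(\<integral>\<^sup>+t. ennreal (\<bar>H (G t) - H t\<bar> powr p) \<partial>uniform01) \<le> ennreal (3 powr p) *
    (ennreal ((\<Sum>i<n. \<bar>H (U i \<omega>) - \<phi> (U i \<omega>)\<bar> powr p) / real n) +
     (\<integral>\<^sup>+t. ennreal (\<bar>\<phi> (G t) - \<phi> t\<bar> powr p) \<partial>uniform01) +
     (\<integral>\<^sup>+t. ennreal (\<bar>H t - \<phi> t\<bar> powr p) \<partial>uniform01))"
proof -
  define \<psi> where "\<psi> x = \<bar>H x - \<phi> x\<bar> powr p" for x
  have [measurable]: "\<psi> \<in> borel_measurable borel"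
    unfolding \<psi>_def by measurable
  have [measurable]: "G \<in> borel_measurable uniform01"
    unfolding G_def by (rule measurable_gen_inv_emp_df[OF n])
  have [measurable]: "(\<lambda>t. t) \<in> borel_measurable uniform01"
    by (rule measurable_uniform01I) simp
  have "\<bar>H (G t) - H t\<bar> powr p \<le> 3 powr p * (\<psi> (G t) + \<bar>\<phi> (G t) - \<phi> t\<bar> powr p + \<psi> t)" for t
    using powr_abs_diff_le_3[OF p, of "H (G t)" "H t" "\<phi> (G t)" "\<phi> t"]
    by (simp add: \<psi>_def abs_minus_commute)
  then have "(\<integral>\<^sup>+t. ennreal (\<bar>H (G t) - H t\<bar> powr p) \<partial>uniform01) \<le>
      (\<integral>\<^sup>+t. ennreal (3 powr p) * (ennreal (\<psi> (G t)) + ennreal (\<bar>\<phi> (G t) - \<phi> t\<bar> powr p) +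
        ennreal (\<psi> t)) \<partial>uniform01)"
    by (intro nn_integral_mono)
      (simp add: \<psi>_def ennreal_mult[symmetric] ennreal_plus[symmetric] del: ennreal_plus)
  also have "\<dots> = ennreal (3 powr p) * ((\<integral>\<^sup>+t. ennreal (\<psi> (G t)) \<partial>uniform01) +
      (\<integral>\<^sup>+t. ennreal (\<bar>\<phi> (G t) - \<phi> t\<bar> powr p) \<partial>uniform01) + (\<integral>\<^sup>+t. ennreal (\<psi> t) \<partial>uniform01))"
    by (simp add: nn_integral_cmult nn_integral_add)
  also have "(\<integral>\<^sup>+t. ennreal (\<psi> (G t)) \<partial>uniform01) = ennreal ((\<Sum>i<n. \<psi> (U i \<omega>)) / real n)"
    unfolding G_def by (rule nn_integral_gen_inv_emp_df[OF n]) (auto simp: \<psi>_def)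
  finally show ?thesis
    by (simp add: \<psi>_def)
qed

lemma Lp_gen_inv_emp_df_tendsto_zero:
  fixes H :: "real \<Rightarrow> real" and \<phi> :: "nat \<Rightarrow> real \<Rightarrow> real"
    and U :: "nat \<Rightarrow> 'a \<Rightarrow> real" and \<omega> :: 'a
  assumes [measurable]: "H \<in> borel_measurable borel" and p: "0 < p"
    and \<phi>: "\<And>m. continuous_on UNIV (\<phi> m)" "\<And>m x. \<bar>\<phi> m x\<bar> \<le> B m"
    and approx: "(\<lambda>m. \<integral>\<^sup>+t. ennreal (\<bar>H t - \<phi> m t\<bar> powr p) \<partial>uniform01) \<longlonglongrightarrow> 0"
    and averages: "\<And>m. (\<lambda>n. ennreal ((\<Sum>i<n. \<bar>H (U i \<omega>) - \<phi> m (U i \<omega>)\<bar> powr p) / real n))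
      \<longlonglongrightarrow> (\<integral>\<^sup>+t. ennreal (\<bar>H t - \<phi> m t\<bar> powr p) \<partial>uniform01)"
    and quantiles: "\<And>t. t \<in> {0<..<1} \<Longrightarrow> (\<lambda>n. gen_inv (emp_df U n \<omega>) t) \<longlonglongrightarrow> t"
  shows "(\<lambda>n. \<integral>\<^sup>+t. ennreal (\<bar>H (gen_inv (emp_df U n \<omega>) t) - H t\<bar> powr p) \<partial>uniform01) \<longlonglongrightarrow> 0"
proof -
  have [measurable]: "\<phi> m \<in> borel_measurable borel" for m
    using \<phi>(1) by (rule borel_measurable_continuous_onI)
  define A where "A m n = ennreal ((\<Sum>i<n. \<bar>H (U i \<omega>) - \<phi> m (U i \<omega>)\<bar> powr p) / real n)" for m n
  define D where "D m n = (\<integral>\<^sup>+t. ennreal (\<bar>\<phi> m (gen_inv (emp_df U n \<omega>) t) - \<phi> m t\<bar> powr p) \<partial>uniform01)"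
    for m n
  define c where "c m = (\<integral>\<^sup>+t. ennreal (\<bar>H t - \<phi> m t\<bar> powr p) \<partial>uniform01)" for m
  have "(\<lambda>k. D m (Suc k)) \<longlonglongrightarrow> 0" for m
    unfolding D_def using \<phi> p measurable_gen_inv_emp_df[OF zero_less_Suc] quantiles
    by (intro Lp_comp_tendsto_zero_continuous[where B = "B m"] LIMSEQ_Suc) auto
  then have D: "D m \<longlonglongrightarrow> 0" for m
    by (rule LIMSEQ_imp_Suc)
  show ?thesis
  proof (rule ennreal_tendsto_zero_by_approximation)
    show "\<forall>\<^sub>F n in sequentially. (\<integral>\<^sup>+t. ennreal (\<bar>H (gen_inv (emp_df U n \<omega>) t) - H t\<bar> powr p) \<partial>uniform01)
        \<le> ennreal (3 powr p) * (A m n + D m n + c m)" for m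
      using eventually_gt_at_top[of 0] unfolding A_def D_def c_def
      by (rule eventually_mono) (intro Lp_gen_inv_emp_df_le p; simp)
    show "(\<lambda>n. ennreal (3 powr p) * (A m n + D m n + c m)) \<longlonglongrightarrow> ennreal (3 powr p) * (c m + 0 + c m)" for m
      using averages[of m] D[of m] unfolding A_def c_def
      by (intro ennreal_tendsto_cmult tendsto_add tendsto_const) auto
    show "(\<lambda>m. ennreal (3 powr p) * (c m + 0 + c m)) \<longlonglongrightarrow> 0"
      using approx unfolding c_def
      by (auto intro!: ennreal_tendsto_cmult[where x = 0, simplified] tendsto_add[where a = 0 and b = 0, simplified])
  qed
qed

section \<open>Ergodic averages under uniform marginals\<close>

context
  fixes M :: "'a measure" and U :: "nat \<Rightarrow> 'a \<Rightarrow> real"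
  assumes M: "prob_space M" and stationary: "strictly_stationary M U"
    and ergodic: "ergodic_process M U"
    and uniform: "\<And>i. distr M borel (U i) = uniform_measure lborel {0..1}"
begin

lemma measurable_U [measurable]: "U i \<in> borel_measurable M"
  using stationary by (simp add: strictly_stationary_def)

lemma AE_ergodic_average_uniform:
  assumes [measurable]: "g \<in> borel_measurable borel" and g: "\<And>t. 0 \<le> g t"
    and fin: "(\<integral>\<^sup>+t. ennreal (g t) \<partial>uniform01) < \<infinity>"
  shows "AE \<omega> in M. (\<lambda>n. ennreal ((\<Sum>i<n. g (U i \<omega>)) / real n)) \<longlonglongrightarrow> (\<integral>\<^sup>+t. ennreal (g t) \<partial>uniform01)"
proof -
  have nn: "(\<integral>\<^sup>+\<omega>. ennreal (g (U 0 \<omega>)) \<partial>M) = (\<integral>\<^sup>+t. ennreal (g t) \<partial>uniform01)"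
    by (rule nn_integral_uniform_marginal[OF measurable_U _ uniform]) simp
  have int: "integrable M (\<lambda>\<omega>. g (U 0 \<omega>))"
    using fin g by (intro integrableI_nonneg) (auto simp: nn)
  have "ennreal (\<integral>\<omega>. g (U 0 \<omega>) \<partial>M) = (\<integral>\<^sup>+t. ennreal (g t) \<partial>uniform01)"
    using int g by (simp add: nn_integral_eq_integral[symmetric] nn)
  with birkhoff_stationary_process[OF M stationary ergodic assms(1) int] show ?thesis
    by (auto elim!: eventually_mono dest: tendsto_ennrealI)
qed

lemma emp_df_eq_average: "emp_df U n \<omega> x = (\<Sum>i<n. indicator {..x} (U i \<omega>)) / real n"
proof -
  have "(\<Sum>i<n. indicator {..x} (U i \<omega>) :: real) = real (card ({..<n} \<inter> {i. U i \<omega> \<le> x}))"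
    using sum_indicator_eq_card[of "{..<n}" "{i. U i \<omega> \<le> x}"] by (simp add: indicator_def)
  also have "{..<n} \<inter> {i. U i \<omega> \<le> x} = {i. i < n \<and> U i \<omega> \<le> x}"
    by auto
  finally show ?thesis
    by (simp add: emp_df_def)
qed

lemma AE_emp_df_tendsto:
  assumes x: "0 < x" "x < 1"
  shows "AE \<omega> in M. (\<lambda>n. emp_df U n \<omega> x) \<longlonglongrightarrow> x"
proof -
  have "(\<integral>\<^sup>+t. ennreal (indicator {..x} t) \<partial>uniform01) = (\<integral>\<^sup>+t. indicator {0..x} t \<partial>lborel)"
    unfolding nn_integral_uniform01 using x by (intro nn_integral_cong) (auto simp: indicator_def)
  also have "\<dots> = ennreal x"
    using x by simp
  finally have int: "(\<integral>\<^sup>+t. ennreal (indicator {..x} t) \<partial>uniform01) = ennreal x" .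
  have "AE \<omega> in M. (\<lambda>n. ennreal (emp_df U n \<omega> x)) \<longlonglongrightarrow> ennreal x"
    using AE_ergodic_average_uniform[of "indicator {..x}"] int by (simp add: emp_df_eq_average)
  then show ?thesis
    by (rule AE_mp) (use x in \<open>auto intro!: AE_I2 simp: emp_df_def\<close>)
qed

lemma AE_gen_inv_emp_df_tendsto:
  "AE \<omega> in M. \<forall>t\<in>{0<..<1}. (\<lambda>n. gen_inv (emp_df U n \<omega>) t) \<longlonglongrightarrow> t"
proof -
  have "AE \<omega> in M. \<forall>q::rat. (0::real) < of_rat q \<and> of_rat q < (1::real) \<longrightarrow>
      (\<lambda>n. emp_df U n \<omega> (of_rat q)) \<longlonglongrightarrow> of_rat q"
  proof (subst AE_all_countable, intro allI)
    fix q :: rat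
    show "AE \<omega> in M. (0::real) < of_rat q \<and> of_rat q < (1::real) \<longrightarrow>
        (\<lambda>n. emp_df U n \<omega> (of_rat q)) \<longlonglongrightarrow> of_rat q"
      using AE_emp_df_tendsto[of "of_rat q"] by (cases "(0::real) < of_rat q \<and> of_rat q < (1::real)") auto
  qed
  then show ?thesis
  proof eventually_elim
    case (elim \<omega>)
    show ?case
      using elim by (auto intro!: gen_inv_tendsto mono_emp_df elim!: Rats_cases)
  qed
qed

lemma AE_U_in_01: "AE \<omega> in M. \<forall>i. U i \<omega> \<in> {0<..<1}"
proof (subst AE_all_countable, intro allI)
  fix i
  have "AE x in lborel. x \<in> {0..1::real} \<longrightarrow> x \<in> {0<..<1}"
    using AE_lborel_singleton[of 0] AE_lborel_singleton[of 1] by eventually_elim auto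
  then have "AE x in uniform_measure lborel {0..1::real}. x \<in> {0<..<1}"
    by (subst AE_uniform_measure) auto
  then have "AE x in distr M borel (U i). x \<in> {0<..<1}"
    by (simp only: uniform)
  then show "AE \<omega> in M. U i \<omega> \<in> {0<..<1}"
    by (rule AE_distrD[OF measurable_U])
qed

theorem AE_Lp_gen_inv_emp_df_tendsto_zero:
  fixes H :: "real \<Rightarrow> real"
  assumes H: "H \<in> borel_measurable uniform01" and p: "0 < p"
    and fin: "(\<integral>\<^sup>+t. ennreal (\<bar>H t\<bar> powr p) \<partial>uniform01) < \<infinity>"
  shows "AE \<omega> in M.
    (\<lambda>n. \<integral>\<^sup>+t. ennreal (\<bar>H (gen_inv (emp_df U n \<omega>) t) - H t\<bar> powr p) \<partial>uniform01) \<longlonglongrightarrow> 0"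
proof -
  (* H is only measurable on (0,1), but the ergodic theorem needs a Borel function on the reals;
     since G_n^-1 takes values in (0,1) almost everywhere, a Borel extension H' may replace H. *)
  obtain H' where H'_meas [measurable]: "H' \<in> borel_measurable borel"
    and H': "\<And>t. t \<in> {0<..<1} \<Longrightarrow> H' t = H t"
    using borel_extension_uniform01[OF H] by blast
  have "(\<integral>\<^sup>+t. ennreal (\<bar>H' t\<bar> powr p) \<partial>uniform01) = (\<integral>\<^sup>+t. ennreal (\<bar>H t\<bar> powr p) \<partial>uniform01)"
    by (intro nn_integral_cong) (simp add: H' space_restrict_space)
  with fin have "(\<integral>\<^sup>+t. ennreal (\<bar>H' t\<bar> powr p) \<partial>uniform01) < \<infinity>"
    by simp
  then obtain \<phi> B where \<phi>: "\<And>m. continuous_on UNIV (\<phi> m)" "\<And>m x. \<bar>\<phi> m x\<bar> \<le> B m"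
    and fin_m: "\<And>m. (\<integral>\<^sup>+t. ennreal (\<bar>H' t - \<phi> m t\<bar> powr p) \<partial>uniform01) < \<infinity>"
    and approx: "(\<lambda>m. \<integral>\<^sup>+t. ennreal (\<bar>H' t - \<phi> m t\<bar> powr p) \<partial>uniform01) \<longlonglongrightarrow> 0"
    using Lp_approx_seq_bounded_continuous[OF H'_meas p] by blast
  have [measurable]: "\<phi> m \<in> borel_measurable borel" for m
    using \<phi>(1) by (rule borel_measurable_continuous_onI)
  have "AE \<omega> in M. \<forall>m. (\<lambda>n. ennreal ((\<Sum>i<n. \<bar>H' (U i \<omega>) - \<phi> m (U i \<omega>)\<bar> powr p) / real n))
      \<longlonglongrightarrow> (\<integral>\<^sup>+t. ennreal (\<bar>H' t - \<phi> m t\<bar> powr p) \<partial>uniform01)"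
    using fin_m by (subst AE_all_countable, intro allI AE_ergodic_average_uniform) simp_all
  with AE_U_in_01 AE_gen_inv_emp_df_tendsto show ?thesis
  proof eventually_elim
    case (elim \<omega>)
    have "(\<lambda>n. \<integral>\<^sup>+t. ennreal (\<bar>H' (gen_inv (emp_df U n \<omega>) t) - H' t\<bar> powr p) \<partial>uniform01) \<longlonglongrightarrow> 0"
      using elim by (intro Lp_gen_inv_emp_df_tendsto_zero[OF H'_meas p \<phi> approx]) auto
    moreover have "\<forall>\<^sub>F n in sequentially.
        (\<integral>\<^sup>+t. ennreal (\<bar>H' (gen_inv (emp_df U n \<omega>) t) - H' t\<bar> powr p) \<partial>uniform01) =
        (\<integral>\<^sup>+t. ennreal (\<bar>H (gen_inv (emp_df U n \<omega>) t) - H t\<bar> powr p) \<partial>uniform01)"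
      using eventually_gt_at_top[of 0]
      by (rule eventually_mono) (rule nn_integral_gen_inv_emp_df_cong, use elim H' in auto)
    ultimately show ?case
      by (rule Lim_transform_eventually)
  qed
qed

end

theorem lemma3:
  fixes M :: "'a measure" and X U :: "nat \<Rightarrow> 'a \<Rightarrow> real"
    and h :: "real \<Rightarrow> real" and p :: real
  assumes "prob_space M"
    and "strictly_stationary M X" and "ergodic_process M X"
    and "h \<in> borel_measurable borel"
    and "1 \<le> p"
    and "integrable M (\<lambda>\<omega>. \<bar>h (X 0 \<omega>)\<bar> powr p)"
    and "strictly_stationary M U" and "ergodic_process M U"
    and "\<And>i. distr M borel (U i) = uniform_measure lborel {0..1}"
  shows "let F = (\<lambda>x. measure M {\<omega> \<in> space M. X 0 \<omega> \<le> x});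
             H = (\<lambda>t. h (gen_inv F t))
         in AE \<omega> in M.
              (\<lambda>n. \<integral>\<^sup>+ t. ennreal (indicator {0..1} t *
                    \<bar>H (gen_inv (emp_df U n \<omega>) t) - H t\<bar> powr p) \<partial>lborel)
              \<longlonglongrightarrow> 0"
proof -
  have [measurable]: "X 0 \<in> borel_measurable M" "h \<in> borel_measurable borel"
    using assms(2,4) by (simp_all add: strictly_stationary_def)
  define F where "F = (\<lambda>x. measure M {\<omega> \<in> space M. X 0 \<omega> \<le> x})"
  have H: "(\<lambda>t. h (gen_inv F t)) \<in> borel_measurable uniform01"
    using measurable_gen_inv_df[OF assms(1), of "X 0"] unfolding F_def by measurable
  have "(\<integral>\<^sup>+t. ennreal (\<bar>h (gen_inv F t)\<bar> powr p) \<partial>uniform01) = (\<integral>\<^sup>+\<omega>. ennreal (\<bar>h (X 0 \<omega>)\<bar> powr p) \<partial>M)"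
    unfolding F_def by (rule nn_integral_gen_inv_df[OF assms(1)]) measurable
  also have "\<dots> < \<infinity>"
    using assms(6) by (simp add: integrable_iff_bounded)
  finally have "AE \<omega> in M. (\<lambda>n. \<integral>\<^sup>+t. ennreal (\<bar>h (gen_inv F (gen_inv (emp_df U n \<omega>) t)) -
      h (gen_inv F t)\<bar> powr p) \<partial>uniform01) \<longlonglongrightarrow> 0"
    using assms(5) by (intro AE_Lp_gen_inv_emp_df_tendsto_zero[OF assms(1,7-9) H]) auto
  then show ?thesis
    unfolding Let_def F_def[symmetric] by (simp add: nn_integral_lborel_indicator_01)
qed

end
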